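(* Let $G$ be a group and $p$ a prime number. If the set $\mathrm{val}_{X^p}(G)\cup \mathrm{val}_{[X,Y]}(G)$ does not generate $G$ in finitely many steps, then for every non-principal ultrafilter $\mathcal U$ on $\omega$, the ultrapower $G^{\omega}/\mathcal U$ admits a surjective homomorphism onto $\mathbb Z/p\mathbb Z$.
   Context: For a group $G$ and a group word $w(\bar X)$, $\mathrm{val}_w(G)=\{w(\bar g) : \bar g \text{ a tuple of elements of } G\}$; thus $\mathrm{val}_{X^p}(G)=\{g^p : g\in G\}$ and $\mathrm{val}_{[X,Y]}(G)=\{[g,h] : g,h\in G\}$. A generating subset $S$ of a group $G$ generates $G$ in $n$ steps if $G = (S^{\pm1}\cup\{1\})^n$, i.e. every element of $G$ is a product of $n$ elements of $S\cup S^{-1}\cup\{1\}$; "$S$ generates $G$ in finitely many steps" means this holds for some $n\in\mathbb N$. $G^{\omega}/\mathcal U$ is the ultrapower of $G$ with respect to $\mathcal U$. *)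

theory Defs
  imports "HOL-Algebra.Algebra" "HOL-Library.FuncSet" "HOL-Computational_Algebra.Primes"
begin

definition grp_comm :: "('a, 'b) monoid_scheme \<Rightarrow> 'a \<Rightarrow> 'a \<Rightarrow> 'a" where
  "grp_comm G g h = inv\<^bsub>G\<^esub> g \<otimes>\<^bsub>G\<^esub> inv\<^bsub>G\<^esub> h \<otimes>\<^bsub>G\<^esub> g \<otimes>\<^bsub>G\<^esub> h"

definition pow_comm_values :: "('a, 'b) monoid_scheme \<Rightarrow> nat \<Rightarrow> 'a set" where
  "pow_comm_values G p =
     {g [^]\<^bsub>G\<^esub> p | g. g \<in> carrier G} \<union> {grp_comm G g h | g h. g \<in> carrier G \<and> h \<in> carrier G}"

fun prod_steps :: "('a, 'b) monoid_scheme \<Rightarrow> 'a set \<Rightarrow> nat \<Rightarrow> 'a set" where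
  "prod_steps G T 0 = {\<one>\<^bsub>G\<^esub>}"
| "prod_steps G T (Suc n) = {a \<otimes>\<^bsub>G\<^esub> b | a b. a \<in> prod_steps G T n \<and> b \<in> T}"

definition generates_in_steps :: "('a, 'b) monoid_scheme \<Rightarrow> 'a set \<Rightarrow> nat \<Rightarrow> bool" where
  "generates_in_steps G S n \<longleftrightarrow>
     carrier G = prod_steps G (S \<union> (\<lambda>x. inv\<^bsub>G\<^esub> x) ` S \<union> {\<one>\<^bsub>G\<^esub>}) n"

definition generates_finitely :: "('a, 'b) monoid_scheme \<Rightarrow> 'a set \<Rightarrow> bool" where
  "generates_finitely G S \<longleftrightarrow> (\<exists>n. generates_in_steps G S n)"

definition is_ultrafilter :: "nat filter \<Rightarrow> bool" where
  "is_ultrafilter U \<longleftrightarrow> U \<noteq> bot \<and> (\<forall>P. eventually P U \<or> eventually (\<lambda>x. \<not> P x) U)"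

definition non_principal :: "nat filter \<Rightarrow> bool" where
  "non_principal U \<longleftrightarrow> (\<forall>n. \<not> eventually (\<lambda>x. x = n) U)"

definition ultra_eq :: "('a, 'b) monoid_scheme \<Rightarrow> nat filter \<Rightarrow> ((nat \<Rightarrow> 'a) \<times> (nat \<Rightarrow> 'a)) set" where
  "ultra_eq G U = {(f, g). f \<in> (UNIV \<rightarrow> carrier G) \<and> g \<in> (UNIV \<rightarrow> carrier G)
                          \<and> eventually (\<lambda>n. f n = g n) U}"

definition ultrapower :: "('a, 'b) monoid_scheme \<Rightarrow> nat filter \<Rightarrow> (nat \<Rightarrow> 'a) set monoid" where
  "ultrapower G U =
     \<lparr> carrier = (UNIV \<rightarrow> carrier G) // ultra_eq G U,
       monoid.mult = (\<lambda>A B. ultra_eq G U `` {\<lambda>n. (SOME f. f \<in> A) n \<otimes>\<^bsub>G\<^esub> (SOME g. g \<in> B) n}),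
       one = ultra_eq G U `` {\<lambda>n. \<one>\<^bsub>G\<^esub>} \<rparr>"

end

theory Submission
  imports Defs
begin

(* Let S be the symmetrized set of p-th powers and commutators of G and
   call a sequence (g_n) in G of bounded width along U if for some k, U-almost every g_n
   is a product of k elements of S.  These sequences form a subgroup W of the group
   G^omega of all sequences; it is normal because conjugating an element costs one extra
   commutator, and it contains all pointwise p-th powers and commutators.  Hence
   G^omega/W is an elementary abelian p-group, i.e. a vector space over F_p.
   Because S does not generate G in finitely many steps, one can pick g_k outside the
   k-fold products of S; as U is a non-principal ultrafilter this sequence is not in W,
   so G^omega/W is nontrivial and (by Zorn's lemma) has a surjective homomorphism onto
   Z/pZ.  Sequences that agree U-almost everywhere are congruent modulo W, so the
   quotient map factors through the ultrapower G^omega/U, and composing gives the claim. *)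

lemma (in group) chain_Union_subgroup:
  assumes "C \<noteq> {}" and sub: "\<And>H. H \<in> C \<Longrightarrow> subgroup H G"
    and chain: "\<And>A B. A \<in> C \<Longrightarrow> B \<in> C \<Longrightarrow> A \<subseteq> B \<or> B \<subseteq> A"
  shows "subgroup (\<Union>C) G"
proof (rule subgroupI)
  show "\<Union>C \<subseteq> carrier G" by (meson Union_least sub subgroup.subset)
  obtain H where "H \<in> C" using assms(1) by blast
  then show "\<Union>C \<noteq> {}" using sub[THEN subgroup.one_closed] by auto
  show "inv a \<in> \<Union>C" if a: "a \<in> \<Union>C" for a
  proof -
    obtain A where "A \<in> C" "a \<in> A" using a by (rule UnionE)
    then show ?thesis using sub[THEN subgroup.m_inv_closed] by auto
  qed
  show "a \<otimes> b \<in> \<Union>C" if a: "a \<in> \<Union>C" and b: "b \<in> \<Union>C" for a b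
  proof -
    obtain A where A: "A \<in> C" "a \<in> A" using a by (rule UnionE)
    obtain B where B: "B \<in> C" "b \<in> B" using b by (rule UnionE)
    from chain[OF A(1) B(1)] show ?thesis
    proof
      assume "A \<subseteq> B"
      then have "a \<otimes> b \<in> B" using A B sub[THEN subgroup.m_closed] by auto
      then show ?thesis by (rule UnionI[OF B(1)])
    next
      assume "B \<subseteq> A"
      then have "a \<otimes> b \<in> A" using A B sub[THEN subgroup.m_closed] by auto
      then show ?thesis by (rule UnionI[OF A(1)])
    qed
  qed
qed

lemma (in group) maximal_subgroup_avoiding:
  assumes "x \<noteq> \<one>"
  shows "\<exists>M. subgroup M G \<and> x \<notin> M \<and> (\<forall>H. subgroup H G \<and> x \<notin> H \<and> M \<subseteq> H \<longrightarrow> H = M)"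
proof -
  let ?F = "{H. subgroup H G \<and> x \<notin> H}"
  have "\<exists>M\<in>?F. \<forall>H\<in>?F. M \<subseteq> H \<longrightarrow> H = M"
  proof (rule subset_Zorn_nonempty)
    have "{\<one>} \<in> ?F" using triv_subgroup assms by simp
    then show "?F \<noteq> {}" by auto
  next
    fix C assume C: "C \<noteq> {}" "subset.chain ?F C"
    then have "subgroup (\<Union>C) G"
      by (intro chain_Union_subgroup) (auto simp: subset.chain_def)
    moreover have "x \<notin> \<Union>C" using C(2) by (auto simp: subset.chain_def)
    ultimately show "\<Union>C \<in> ?F" by simp
  qed
  then show ?thesis by auto
qed

lemma (in comm_group) subgroup_adjoin:
  assumes M: "subgroup M G" and y: "y \<in> carrier G"
  shows "subgroup {y [^] (i::int) \<otimes> m | i m. m \<in> M} G" (is "subgroup ?M' G")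
proof (rule subgroupI)
  have Mc: "M \<subseteq> carrier G" using M by (rule subgroup.subset)
  then show "?M' \<subseteq> carrier G" using y by auto
  have "y [^] (0::int) \<otimes> \<one> \<in> ?M'" using M subgroup.one_closed by fastforce
  then show "?M' \<noteq> {}" by auto
  fix a b assume "a \<in> ?M'"
  then obtain i m where a: "a = y [^] (i::int) \<otimes> m" "m \<in> M" by auto
  have "inv a = y [^] (- i) \<otimes> inv m"
    using a Mc y by (simp add: inv_mult int_pow_neg subset_iff)
  moreover have "inv m \<in> M" using M a(2) by (rule subgroup.m_inv_closed)
  ultimately show "inv a \<in> ?M'" by auto
  assume "b \<in> ?M'"
  then obtain j n where b: "b = y [^] (j::int) \<otimes> n" "n \<in> M" by auto
  have "a \<otimes> b = y [^] (i + j) \<otimes> (m \<otimes> n)"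
    using a b Mc y by (simp add: int_pow_mult m_ac subset_iff)
  moreover have "m \<otimes> n \<in> M" using M a(2) b(2) by (rule subgroup.m_closed)
  ultimately show "a \<otimes> b \<in> ?M'" by auto
qed

locale elementary_abelian = comm_group G for G (structure) +
  fixes p :: nat
  assumes prime_exponent: "Factorial_Ring.prime p"
    and pow_exponent: "x \<in> carrier G \<Longrightarrow> x [^] p = \<one>"
begin

lemma int_pow_multiple_exponent: "x \<in> carrier G \<Longrightarrow> x [^] (int p * k) = \<one>"
  by (simp add: int_pow_pow[symmetric] int_pow_int pow_exponent)

lemma int_pow_root:
  assumes x: "x \<in> carrier G" and i: "\<not> int p dvd i"
  obtains k where "(x [^] i) [^] (k::int) = x"
proof -
  have "Factorial_Ring.prime (int p)" using prime_exponent by simp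
  then have "coprime (int p) i" using i by (rule prime_imp_coprime)
  then obtain u v where uv: "u * i + v * int p = 1"
    using bezout_int[of i "int p"] by (auto simp: gcd.commute coprime_iff_gcd_eq_1)
  have "x = x [^] (i * u + int p * v)" using x uv by (simp add: algebra_simps)
  also have "\<dots> = (x [^] i) [^] u"
    using x by (simp add: int_pow_mult int_pow_multiple_exponent int_pow_pow)
  finally show ?thesis by (rule that[OF sym])
qed

lemma avoiding_subgroup_exponent:
  assumes M: "subgroup M G" "x \<notin> M" and x: "x \<in> carrier G" and j: "x [^] (j::int) \<in> M"
  shows "int p dvd j"
proof (rule ccontr)
  assume "\<not> int p dvd j"
  then obtain k where "(x [^] j) [^] (k::int) = x" using int_pow_root x by blast
  then show False using subgroup_int_pow_closed[OF M(1) j, of k] M(2) by simp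
qed

(* For a maximal subgroup M avoiding x, every element lies in a coset x^j M:
   otherwise adjoining it to M would give a larger subgroup still avoiding x. *)
lemma coordinate_decomposition:
  assumes x: "x \<in> carrier G" and M: "subgroup M G" "x \<notin> M"
    and maximal: "\<And>H. subgroup H G \<Longrightarrow> x \<notin> H \<Longrightarrow> M \<subseteq> H \<Longrightarrow> H = M"
    and y: "y \<in> carrier G"
  shows "\<exists>j m. m \<in> M \<and> y = x [^] (j::int) \<otimes> m"
proof (cases "y \<in> M")
  case True
  then show ?thesis using y by (intro exI[of _ 0] exI[of _ y]) simp
next
  case False
  let ?M' = "{y [^] (i::int) \<otimes> m | i m. m \<in> M}"
  have Mc: "M \<subseteq> carrier G" using M(1) by (rule subgroup.subset)
  have M': "subgroup ?M' G" using M(1) y by (rule subgroup_adjoin)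
  have "m = y [^] (0::int) \<otimes> m" if "m \<in> M" for m using that Mc by auto
  then have "M \<subseteq> ?M'" by blast
  moreover have "y = y [^] (1::int) \<otimes> \<one>" using y by simp
  then have "y \<in> ?M'" using subgroup.one_closed[OF M(1)] by blast
  ultimately have "x \<in> ?M'" using maximal[OF M'] False by blast
  then obtain i m where m: "m \<in> M" and xim: "x = y [^] (i::int) \<otimes> m" by blast
  have mc: "m \<in> carrier G" using m Mc by auto
  have "\<not> int p dvd i"
  proof
    assume "int p dvd i"
    then have "x = m" using xim y mc by (auto simp: int_pow_multiple_exponent)
    then show False using m M(2) by simp
  qed
  then obtain k where k: "(y [^] i) [^] (k::int) = y" using int_pow_root y by blast
  have "y [^] i = x \<otimes> inv m" using xim y mc by (simp add: m_assoc)
  then have "y = x [^] k \<otimes> inv m [^] k" using k x mc by (simp add: int_pow_distrib)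
  moreover have "inv m [^] k \<in> M"
    using M(1) subgroup.m_inv_closed[OF M(1) m] by (rule subgroup_int_pow_closed)
  ultimately show ?thesis by blast
qed

lemma coordinate_unique:
  assumes x: "x \<in> carrier G" and M: "subgroup M G" "x \<notin> M"
    and m: "m \<in> M" "m' \<in> M" and eq: "x [^] (j::int) \<otimes> m = x [^] j' \<otimes> m'"
  shows "j mod int p = j' mod int p"
proof -
  have c: "m \<in> carrier G" "m' \<in> carrier G" using m M(1) subgroup.subset by auto
  have "x [^] j = x [^] j' \<otimes> m' \<otimes> inv m" using eq x c by (simp add: inv_solve_right)
  then have "x [^] (j - j') = (m' \<otimes> inv m) \<otimes> (x [^] j' \<otimes> inv (x [^] j'))"
    using x c by (simp add: int_pow_diff m_ac)
  also have "\<dots> = m' \<otimes> inv m" using x c by simp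
  also have "\<dots> \<in> M" using M(1) m by (simp add: subgroup.m_closed subgroup.m_inv_closed)
  finally have "int p dvd j - j'" using avoiding_subgroup_exponent[OF M x] by blast
  then show ?thesis by (simp add: mod_eq_dvd_iff)
qed

(* A nontrivial elementary abelian p-group maps onto Z/pZ: send x^j m to j mod p. *)
theorem surjective_functional:
  assumes x: "x \<in> carrier G" "x \<noteq> \<one>"
  obtains \<phi> where "\<phi> \<in> hom G (integer_mod_group p)"
    "\<phi> ` carrier G = carrier (integer_mod_group p)"
proof -
  obtain M where M: "subgroup M G" "x \<notin> M"
    and maximal: "\<And>H. subgroup H G \<Longrightarrow> x \<notin> H \<Longrightarrow> M \<subseteq> H \<Longrightarrow> H = M"
    using maximal_subgroup_avoiding[OF x(2)] by auto
  have p0: "p \<noteq> 0" using prime_exponent by auto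
  have Zp: "carrier (integer_mod_group p) = {0..<int p}"
    using p0 by (simp add: carrier_integer_mod_group)
  define \<phi> where "\<phi> y = (SOME j. \<exists>m\<in>M. y = x [^] (j::int) \<otimes> m) mod int p" for y
  have \<phi>_eq: "\<phi> (x [^] j \<otimes> m) = j mod int p" if m: "m \<in> M" for j m
  proof -
    let ?j = "SOME j'. \<exists>m'\<in>M. x [^] j \<otimes> m = x [^] (j'::int) \<otimes> m'"
    have "\<exists>j'. \<exists>m'\<in>M. x [^] j \<otimes> m = x [^] (j'::int) \<otimes> m'" using m by blast
    then have "\<exists>m'\<in>M. x [^] j \<otimes> m = x [^] ?j \<otimes> m'" by (rule someI_ex)
    then obtain m' where "m' \<in> M" "x [^] j \<otimes> m = x [^] ?j \<otimes> m'" by blast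
    then have "j mod int p = ?j mod int p" by (rule coordinate_unique[OF x(1) M m])
    then show ?thesis unfolding \<phi>_def by simp
  qed
  have coords: "\<exists>j m. m \<in> M \<and> y = x [^] (j::int) \<otimes> m" if "y \<in> carrier G" for y
    by (rule coordinate_decomposition[OF x(1) M maximal that])
  have "\<phi> \<in> hom G (integer_mod_group p)"
  proof (rule homI)
    fix y assume "y \<in> carrier G"
    then obtain j m where "m \<in> M" "y = x [^] (j::int) \<otimes> m" using coords by blast
    then show "\<phi> y \<in> carrier (integer_mod_group p)" using \<phi>_eq p0 Zp by simp
  next
    fix y z assume "y \<in> carrier G" "z \<in> carrier G"
    obtain j m where jm: "m \<in> M" "y = x [^] (j::int) \<otimes> m" using coords[OF \<open>y \<in> carrier G\<close>] by blast
    obtain k n where kn: "n \<in> M" "z = x [^] (k::int) \<otimes> n" using coords[OF \<open>z \<in> carrier G\<close>] by blast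
    have c: "m \<in> carrier G" "n \<in> carrier G" using jm kn M(1) subgroup.subset by auto
    have "y \<otimes> z = x [^] (j + k) \<otimes> (m \<otimes> n)"
      using jm kn c x by (simp add: int_pow_mult m_ac)
    moreover have "m \<otimes> n \<in> M" using M(1) jm(1) kn(1) by (rule subgroup.m_closed)
    ultimately have "\<phi> (y \<otimes> z) = (j + k) mod int p" using \<phi>_eq by simp
    then show "\<phi> (y \<otimes> z) = \<phi> y \<otimes>\<^bsub>integer_mod_group p\<^esub> \<phi> z"
      using \<phi>_eq jm kn by (simp add: mod_add_eq)
  qed
  moreover have "\<phi> ` carrier G = carrier (integer_mod_group p)"
  proof
    show "\<phi> ` carrier G \<subseteq> carrier (integer_mod_group p)"
      using \<open>\<phi> \<in> hom G (integer_mod_group p)\<close> by (auto simp: hom_def)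
    show "carrier (integer_mod_group p) \<subseteq> \<phi> ` carrier G"
    proof
      fix j assume "j \<in> carrier (integer_mod_group p)"
      then have "\<phi> (x [^] j \<otimes> \<one>) = j" using \<phi>_eq[OF subgroup.one_closed[OF M(1)]] Zp by simp
      moreover have "x [^] j \<otimes> \<one> \<in> carrier G" using x(1) by simp
      ultimately show "j \<in> \<phi> ` carrier G" by (rule image_eqI[OF sym])
    qed
  qed
  ultimately show ?thesis by (rule that)
qed

end

definition symmetrize :: "('a, 'b) monoid_scheme \<Rightarrow> 'a set \<Rightarrow> 'a set" where
  "symmetrize G S = S \<union> (\<lambda>x. inv\<^bsub>G\<^esub> x) ` S \<union> {\<one>\<^bsub>G\<^esub>}"

lemma generates_finitely_iff:
  "generates_finitely G S \<longleftrightarrow> (\<exists>n. carrier G = prod_steps G (symmetrize G S) n)"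
  by (simp add: generates_finitely_def generates_in_steps_def symmetrize_def)

context group
begin

lemma symmetrize_closed: "S \<subseteq> carrier G \<Longrightarrow> symmetrize G S \<subseteq> carrier G"
  unfolding symmetrize_def by auto

lemma symmetrize_inv: "S \<subseteq> carrier G \<Longrightarrow> s \<in> symmetrize G S \<Longrightarrow> inv s \<in> symmetrize G S"
  unfolding symmetrize_def by (auto simp: subset_iff)

lemma prod_steps_closed: "S \<subseteq> carrier G \<Longrightarrow> prod_steps G S k \<subseteq> carrier G"
  by (induction k) auto

lemma prod_steps_mult:
  assumes S: "S \<subseteq> carrier G" and a: "a \<in> prod_steps G S k"
  shows "b \<in> prod_steps G S l \<Longrightarrow> a \<otimes> b \<in> prod_steps G S (k + l)"
proof (induction l arbitrary: b)
  case 0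
  have "a \<in> carrier G" using a prod_steps_closed[OF S] by blast
  with 0 show ?case using a by simp
next
  case (Suc l)
  then obtain c s where b: "b = c \<otimes> s" "c \<in> prod_steps G S l" "s \<in> S" by auto
  have "a \<in> carrier G" "c \<in> carrier G" "s \<in> carrier G"
    using a b S prod_steps_closed[OF S] by blast+
  then have "a \<otimes> b = (a \<otimes> c) \<otimes> s" using b(1) by (simp add: m_assoc)
  moreover have "a \<otimes> c \<in> prod_steps G S (k + l)" using Suc.IH b(2) .
  ultimately show ?case using b(3) by auto
qed

lemma prod_steps_single:
  assumes "S \<subseteq> carrier G" "s \<in> S" shows "s \<in> prod_steps G S 1"
proof -
  have "s = \<one> \<otimes> s" using assms by auto
  then show ?thesis using assms(2) unfolding One_nat_def prod_steps.simps by blast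
qed

lemma prod_steps_one: "\<one> \<in> S \<Longrightarrow> \<one> \<in> prod_steps G S k"
proof (induction k)
  case (Suc k)
  have "\<one> = \<one> \<otimes> \<one>" by simp
  then show ?case using Suc by (simp only: prod_steps.simps) blast
qed simp

lemma prod_steps_mono:
  assumes S: "S \<subseteq> carrier G" "\<one> \<in> S" and kn: "k \<le> n"
  shows "prod_steps G S k \<subseteq> prod_steps G S n"
proof
  fix a assume a: "a \<in> prod_steps G S k"
  have "a \<otimes> \<one> \<in> prod_steps G S (k + (n - k))"
    using prod_steps_mult[OF S(1) a prod_steps_one[OF S(2)]] .
  moreover have "a \<in> carrier G" using a prod_steps_closed[OF S(1)] by blast
  ultimately show "a \<in> prod_steps G S n" using kn by simp
qed

lemma prod_steps_inv:
  assumes S: "S \<subseteq> carrier G" and inv_S: "\<And>s. s \<in> S \<Longrightarrow> inv s \<in> S"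
  shows "a \<in> prod_steps G S k \<Longrightarrow> inv a \<in> prod_steps G S k"
proof (induction k arbitrary: a)
  case (Suc k)
  then obtain c s where a: "a = c \<otimes> s" "c \<in> prod_steps G S k" "s \<in> S" by auto
  have "c \<in> carrier G" "s \<in> carrier G" using a S prod_steps_closed[OF S] by blast+
  then have "inv a = inv s \<otimes> inv c" using a(1) by (simp add: inv_mult_group)
  moreover have "inv s \<otimes> inv c \<in> prod_steps G S (1 + k)"
    using prod_steps_mult[OF S prod_steps_single[OF S inv_S[OF a(3)]] Suc.IH[OF a(2)]] .
  ultimately show ?case by simp
qed simp

end

definition seq_group :: "('a, 'b) monoid_scheme \<Rightarrow> (nat \<Rightarrow> 'a) monoid" where
  "seq_group G = product_group UNIV (\<lambda>_. G)"

lemma seq_group_carrier: "carrier (seq_group G) = UNIV \<rightarrow> carrier G"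
  by (simp add: seq_group_def PiE_UNIV_domain)

lemma seq_group_mult: "f \<otimes>\<^bsub>seq_group G\<^esub> g = (\<lambda>n. f n \<otimes>\<^bsub>G\<^esub> g n)"
  by (simp add: seq_group_def restrict_def)

lemma seq_group_one: "\<one>\<^bsub>seq_group G\<^esub> = (\<lambda>n. \<one>\<^bsub>G\<^esub>)"
  by (simp add: seq_group_def restrict_def)

lemma seq_group_group: "group G \<Longrightarrow> group (seq_group G)"
  by (simp add: seq_group_def)

lemma seq_group_inv:
  "group G \<Longrightarrow> f \<in> carrier (seq_group G) \<Longrightarrow> inv\<^bsub>seq_group G\<^esub> f = (\<lambda>n. inv\<^bsub>G\<^esub> f n)"
  unfolding seq_group_def by (subst inv_product_group) (auto simp: PiE_UNIV_domain)

lemma seq_group_pow: "f [^]\<^bsub>seq_group G\<^esub> (k::nat) = (\<lambda>n. f n [^]\<^bsub>G\<^esub> k)"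
  by (induction k) (simp_all add: seq_group_one seq_group_mult)

lemma seq_group_comm:
  "group G \<Longrightarrow> f \<in> carrier (seq_group G) \<Longrightarrow> g \<in> carrier (seq_group G) \<Longrightarrow>
     grp_comm (seq_group G) f g = (\<lambda>n. grp_comm G (f n) (g n))"
  by (simp add: grp_comm_def seq_group_inv seq_group_mult)

definition bounded_width :: "('a, 'b) monoid_scheme \<Rightarrow> 'a set \<Rightarrow> nat filter \<Rightarrow> (nat \<Rightarrow> 'a) set" where
  "bounded_width G S U =
     {f \<in> UNIV \<rightarrow> carrier G. \<exists>k. eventually (\<lambda>n. f n \<in> prod_steps G S k) U}"

(* A conjugate of h is h times a commutator, hence costs one extra letter. *)
lemma (in group) conjugate_as_commutator:
  "x \<in> carrier G \<Longrightarrow> h \<in> carrier G \<Longrightarrow> x \<otimes> h \<otimes> inv x = h \<otimes> grp_comm G h (inv x)"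
  unfolding grp_comm_def by (simp add: m_assoc[symmetric])

locale symmetric_subset = group G for G (structure) +
  fixes S :: "'a set"
  assumes subset: "S \<subseteq> carrier G" and one_mem: "\<one> \<in> S"
    and inv_mem: "s \<in> S \<Longrightarrow> inv s \<in> S"
begin

lemma eventually_in_bounded_width:
  assumes "f \<in> UNIV \<rightarrow> carrier G" "eventually (\<lambda>n. f n \<in> S) U"
  shows "f \<in> bounded_width G S U"
proof -
  have "eventually (\<lambda>n. f n \<in> prod_steps G S 1) U"
    using assms(2) by (rule eventually_mono) (rule prod_steps_single[OF subset])
  then show ?thesis using assms(1) unfolding bounded_width_def by blast
qed

lemma bounded_width_subgroup: "subgroup (bounded_width G S U) (seq_group G)"
proof (rule group.subgroupI[OF seq_group_group[OF is_group]])
  show "bounded_width G S U \<subseteq> carrier (seq_group G)"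
    unfolding bounded_width_def seq_group_carrier by blast
  have "\<one>\<^bsub>seq_group G\<^esub> \<in> bounded_width G S U"
    unfolding seq_group_one using one_mem by (intro eventually_in_bounded_width) auto
  then show "bounded_width G S U \<noteq> {}" by blast
next
  fix a assume "a \<in> bounded_width G S U"
  then obtain k where ac: "a \<in> UNIV \<rightarrow> carrier G"
    and k: "eventually (\<lambda>n. a n \<in> prod_steps G S k) U" unfolding bounded_width_def by blast
  have "eventually (\<lambda>n. inv a n \<in> prod_steps G S k) U"
    using k by (rule eventually_mono) (rule prod_steps_inv[OF subset inv_mem])
  then show "inv\<^bsub>seq_group G\<^esub> a \<in> bounded_width G S U"
    using ac by (auto simp: bounded_width_def seq_group_inv[OF is_group] seq_group_carrier)
next
  fix a b assume "a \<in> bounded_width G S U" "b \<in> bounded_width G S U"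
  then obtain k l where ac: "a \<in> UNIV \<rightarrow> carrier G" "b \<in> UNIV \<rightarrow> carrier G"
    and k: "eventually (\<lambda>n. a n \<in> prod_steps G S k) U"
    and l: "eventually (\<lambda>n. b n \<in> prod_steps G S l) U" unfolding bounded_width_def by blast
  have "eventually (\<lambda>n. a n \<otimes> b n \<in> prod_steps G S (k + l)) U"
    using eventually_conj[OF k l] by (rule eventually_mono) (blast intro: prod_steps_mult[OF subset])
  then show "a \<otimes>\<^bsub>seq_group G\<^esub> b \<in> bounded_width G S U"
    using ac by (auto simp: bounded_width_def seq_group_mult)
qed

lemma bounded_width_normal:
  assumes comm: "\<And>g h. g \<in> carrier G \<Longrightarrow> h \<in> carrier G \<Longrightarrow> grp_comm G g h \<in> S"
  shows "bounded_width G S U \<lhd> seq_group G"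
proof -
  interpret P: group "seq_group G" by (rule seq_group_group[OF is_group])
  show ?thesis
  proof (subst P.normal_inv_iff, intro conjI ballI bounded_width_subgroup)
    fix x h assume x: "x \<in> carrier (seq_group G)" and "h \<in> bounded_width G S U"
    then obtain k where hc: "h \<in> UNIV \<rightarrow> carrier G"
      and k: "eventually (\<lambda>n. h n \<in> prod_steps G S k) U" unfolding bounded_width_def by blast
    have xc: "x \<in> UNIV \<rightarrow> carrier G" using x by (simp add: seq_group_carrier)
    have conj: "x \<otimes>\<^bsub>seq_group G\<^esub> h \<otimes>\<^bsub>seq_group G\<^esub> inv\<^bsub>seq_group G\<^esub> x
        = (\<lambda>n. h n \<otimes> grp_comm G (h n) (inv (x n)))"
      using xc hc by (simp add: seq_group_mult seq_group_inv[OF is_group x] conjugate_as_commutator Pi_iff)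
    have "eventually (\<lambda>n. h n \<otimes> grp_comm G (h n) (inv (x n)) \<in> prod_steps G S (k + 1)) U"
    proof (rule eventually_mono[OF k])
      fix n assume "h n \<in> prod_steps G S k"
      moreover have "grp_comm G (h n) (inv (x n)) \<in> prod_steps G S 1"
        using xc hc by (intro prod_steps_single[OF subset] comm) auto
      ultimately show "h n \<otimes> grp_comm G (h n) (inv (x n)) \<in> prod_steps G S (k + 1)"
        by (rule prod_steps_mult[OF subset])
    qed
    moreover have "(\<lambda>n. h n \<otimes> grp_comm G (h n) (inv (x n))) \<in> UNIV \<rightarrow> carrier G"
      using xc hc by (simp add: grp_comm_def Pi_iff)
    ultimately show "x \<otimes>\<^bsub>seq_group G\<^esub> h \<otimes>\<^bsub>seq_group G\<^esub> inv\<^bsub>seq_group G\<^esub> x \<in> bounded_width G S U"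
      unfolding conj bounded_width_def by blast
  qed
qed

end

lemma (in group) symmetric_subset_symmetrize:
  assumes "T \<subseteq> carrier G" shows "symmetric_subset G (symmetrize G T)"
proof (intro symmetric_subset.intro symmetric_subset_axioms.intro)
  show "group G" by (rule is_group)
  show "symmetrize G T \<subseteq> carrier G" using assms by (rule symmetrize_closed)
  show "\<one> \<in> symmetrize G T" by (simp add: symmetrize_def)
  show "inv s \<in> symmetrize G T" if "s \<in> symmetrize G T" for s
    using assms that by (rule symmetrize_inv)
qed

lemma (in group_hom) hom_grp_comm:
  "a \<in> carrier G \<Longrightarrow> b \<in> carrier G \<Longrightarrow> h (grp_comm G a b) = grp_comm H (h a) (h b)"
  unfolding grp_comm_def by simp

lemma (in group) commute_if_grp_comm_one:
  assumes a: "a \<in> carrier G" and b: "b \<in> carrier G" and ab: "grp_comm G a b = \<one>"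
  shows "a \<otimes> b = b \<otimes> a"
proof -
  have "inv (b \<otimes> a) \<otimes> (a \<otimes> b) = \<one>"
    using ab a b by (simp add: grp_comm_def inv_mult_group m_assoc)
  then have "inv (a \<otimes> b) = inv (b \<otimes> a)" using a b by (simp add: inv_equality)
  then show ?thesis using a b by (metis inv_inv m_closed)
qed

lemma (in normal) elementary_abelian_quotient:
  assumes prime: "Factorial_Ring.prime p"
    and pow: "\<And>g. g \<in> carrier G \<Longrightarrow> g [^] p \<in> H"
    and comm: "\<And>g h. g \<in> carrier G \<Longrightarrow> h \<in> carrier G \<Longrightarrow> grp_comm G g h \<in> H"
  shows "elementary_abelian (G Mod H) p"
proof -
  interpret Q: group "G Mod H" by (rule factorgroup_is_group)
  interpret \<pi>: group_hom G "G Mod H" "\<lambda>a. H #> a"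
    by (simp add: group_hom_def group_hom_axioms_def is_group Q.is_group r_coset_hom_Mod)
  have quotient_one: "H #> h = \<one>\<^bsub>G Mod H\<^esub>" if "h \<in> H" for h
    using rcos_const[OF is_group that] by simp
  have onto: "\<exists>a\<in>carrier G. u = H #> a" if "u \<in> carrier (G Mod H)" for u
    using that by (auto simp: carrier_FactGroup)
  show ?thesis
  proof (intro elementary_abelian.intro elementary_abelian_axioms.intro Q.group_comm_groupI prime)
    fix u v assume "u \<in> carrier (G Mod H)" "v \<in> carrier (G Mod H)"
    then obtain a b where ab: "a \<in> carrier G" "b \<in> carrier G" "u = H #> a" "v = H #> b"
      using onto by meson
    have "grp_comm (G Mod H) u v = \<one>\<^bsub>G Mod H\<^esub>"
      using ab \<pi>.hom_grp_comm[of a b] quotient_one[OF comm[OF ab(1,2)]] by simp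
    then show "u \<otimes>\<^bsub>G Mod H\<^esub> v = v \<otimes>\<^bsub>G Mod H\<^esub> u"
      using ab by (intro Q.commute_if_grp_comm_one) auto
  next
    fix u assume "u \<in> carrier (G Mod H)"
    then obtain a where a: "a \<in> carrier G" "u = H #> a" using onto by meson
    then show "u [^]\<^bsub>G Mod H\<^esub> p = \<one>\<^bsub>G Mod H\<^esub>"
      using FactGroup_pow[OF a(1)] quotient_one[OF pow[OF a(1)]] by simp
  qed
qed

lemma ultra_class_representative:
  fixes U :: "nat filter"
  assumes f: "f \<in> UNIV \<rightarrow> carrier G"
  defines "r \<equiv> SOME g. g \<in> ultra_eq G U `` {f}"
  shows "r \<in> UNIV \<rightarrow> carrier G" and "eventually (\<lambda>n. r n = f n) U"
proof -
  have "f \<in> ultra_eq G U `` {f}" using f by (simp add: ultra_eq_def)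
  then have "r \<in> ultra_eq G U `` {f}"
    unfolding r_def by (rule someI[where P = "\<lambda>g. g \<in> ultra_eq G U `` {f}"])
  then show "r \<in> UNIV \<rightarrow> carrier G" "eventually (\<lambda>n. r n = f n) U"
    by (auto simp: ultra_eq_def elim: eventually_mono)
qed

lemma ultrapower_mult_class:
  "A \<otimes>\<^bsub>ultrapower G U\<^esub> B =
     ultra_eq G U `` {(SOME f. f \<in> A) \<otimes>\<^bsub>seq_group G\<^esub> (SOME g. g \<in> B)}"
  by (simp add: ultrapower_def seq_group_mult)

(* A normal subgroup N of G^omega containing every U-almost trivial sequence: the
   quotient map G^omega -> G^omega/N then factors through the ultrapower. *)
locale ultrapower_quotient =
  fixes G :: "('a, 'b) monoid_scheme" and U :: "nat filter" and N :: "(nat \<Rightarrow> 'a) set"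
  assumes group: "group G" and normal: "N \<lhd> seq_group G"
    and almost_trivial: "\<And>f. f \<in> UNIV \<rightarrow> carrier G \<Longrightarrow> eventually (\<lambda>n. f n = \<one>\<^bsub>G\<^esub>) U \<Longrightarrow> f \<in> N"
begin

definition project :: "(nat \<Rightarrow> 'a) set \<Rightarrow> (nat \<Rightarrow> 'a) set" where
  "project A = N #>\<^bsub>seq_group G\<^esub> (SOME f. f \<in> A)"

lemma coset_eq_if_eventually_eq:
  assumes f: "f \<in> UNIV \<rightarrow> carrier G" and g: "g \<in> UNIV \<rightarrow> carrier G"
    and fg: "eventually (\<lambda>n. f n = g n) U"
  shows "N #>\<^bsub>seq_group G\<^esub> f = N #>\<^bsub>seq_group G\<^esub> g"
proof -
  interpret G: group G by (rule group)
  interpret N: normal N "seq_group G" by (rule normal)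
  have fP: "f \<in> carrier (seq_group G)" and gP: "g \<in> carrier (seq_group G)"
    using f g by (simp_all add: seq_group_carrier)
  have "eventually (\<lambda>n. f n \<otimes>\<^bsub>G\<^esub> inv\<^bsub>G\<^esub> g n = \<one>\<^bsub>G\<^esub>) U"
    using fg by (rule eventually_mono) (use g in \<open>auto simp: Pi_iff\<close>)
  then have "f \<otimes>\<^bsub>seq_group G\<^esub> inv\<^bsub>seq_group G\<^esub> g \<in> N"
    using f g by (auto simp: seq_group_mult seq_group_inv[OF group gP] intro!: almost_trivial)
  then have "N #>\<^bsub>seq_group G\<^esub> (f \<otimes>\<^bsub>seq_group G\<^esub> inv\<^bsub>seq_group G\<^esub> g) = N"
    using N.rcos_const[OF N.is_group] by blast
  then show ?thesis using fP gP N.subset by (rule N.coset_mult_inv1)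
qed

lemma project_class:
  assumes "f \<in> UNIV \<rightarrow> carrier G"
  shows "project (ultra_eq G U `` {f}) = N #>\<^bsub>seq_group G\<^esub> f"
  unfolding project_def using ultra_class_representative[OF assms]
  by (intro coset_eq_if_eventually_eq) (auto simp: assms)

lemma ultrapower_carrier_cases:
  assumes "A \<in> carrier (ultrapower G U)"
  obtains f where "f \<in> UNIV \<rightarrow> carrier G" "A = ultra_eq G U `` {f}"
  using assms by (auto simp: ultrapower_def elim!: quotientE)

lemma representative_closed:
  assumes "A \<in> carrier (ultrapower G U)"
  shows "(SOME f. f \<in> A) \<in> carrier (seq_group G)"
proof -
  obtain f where f: "f \<in> UNIV \<rightarrow> carrier G" "A = ultra_eq G U `` {f}"
    using assms by (rule ultrapower_carrier_cases)
  then show ?thesis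
    using ultra_class_representative(1)[OF f(1), of U] by (simp add: seq_group_carrier)
qed

lemma project_hom: "project \<in> hom (ultrapower G U) (seq_group G Mod N)"
proof -
  interpret N: normal N "seq_group G" by (rule normal)
  have project_closed: "project A \<in> carrier (seq_group G Mod N)"
    if "A \<in> carrier (ultrapower G U)" for A
    using representative_closed[OF that] by (simp add: project_def carrier_FactGroup)
  show ?thesis
  proof (rule homI)
    fix A B assume A: "A \<in> carrier (ultrapower G U)" and B: "B \<in> carrier (ultrapower G U)"
    let ?ra = "SOME f. f \<in> A" and ?rb = "SOME f. f \<in> B"
    have "?ra \<otimes>\<^bsub>seq_group G\<^esub> ?rb \<in> UNIV \<rightarrow> carrier G"
      using representative_closed[OF A] representative_closed[OF B] N.m_closed
      by (simp add: seq_group_carrier[symmetric])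
    then have "project (A \<otimes>\<^bsub>ultrapower G U\<^esub> B) = N #>\<^bsub>seq_group G\<^esub> (?ra \<otimes>\<^bsub>seq_group G\<^esub> ?rb)"
      by (simp add: ultrapower_mult_class project_class)
    also have "\<dots> = project A \<otimes>\<^bsub>seq_group G Mod N\<^esub> project B"
      using N.r_coset_hom_Mod representative_closed[OF A] representative_closed[OF B]
      unfolding project_def hom_def by simp
    finally show "project (A \<otimes>\<^bsub>ultrapower G U\<^esub> B) = project A \<otimes>\<^bsub>seq_group G Mod N\<^esub> project B" .
  qed (rule project_closed)
qed

lemma project_onto: "project ` carrier (ultrapower G U) = carrier (seq_group G Mod N)"
proof
  show "project ` carrier (ultrapower G U) \<subseteq> carrier (seq_group G Mod N)"
    using project_hom by (auto simp: hom_def)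
  show "carrier (seq_group G Mod N) \<subseteq> project ` carrier (ultrapower G U)"
  proof
    fix u assume "u \<in> carrier (seq_group G Mod N)"
    then obtain f where f: "f \<in> UNIV \<rightarrow> carrier G" "u = N #>\<^bsub>seq_group G\<^esub> f"
      by (auto simp: carrier_FactGroup seq_group_carrier)
    have "ultra_eq G U `` {f} \<in> carrier (ultrapower G U)"
      using f(1) by (simp add: ultrapower_def quotientI)
    moreover have "u = project (ultra_eq G U `` {f})" using f by (simp add: project_class)
    ultimately show "u \<in> project ` carrier (ultrapower G U)" by blast
  qed
qed

end

lemma non_principal_eventually_ge:
  assumes "is_ultrafilter U" "non_principal U" shows "eventually (\<lambda>n. k \<le> n) U"
proof -
  have "eventually (\<lambda>n. \<forall>m\<in>{..<k}. n \<noteq> m) U"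
    using assms by (intro eventually_ball_finite) (auto simp: non_principal_def is_ultrafilter_def)
  then show ?thesis by (rule eventually_mono) (auto simp: not_le[symmetric])
qed

(* If S does not generate G in finitely many steps, some sequence has unbounded width:
   take its k-th term outside the k-fold products. *)
lemma (in group) escaping_sequence:
  assumes S: "S \<subseteq> carrier G" and not_gen: "\<not> generates_finitely G S"
    and U: "is_ultrafilter U" "non_principal U"
  obtains f where "f \<in> UNIV \<rightarrow> carrier G" "f \<notin> bounded_width G (symmetrize G S) U"
proof -
  let ?T = "symmetrize G S"
  have T: "?T \<subseteq> carrier G" "\<one> \<in> ?T" using symmetrize_closed[OF S] by (auto simp: symmetrize_def)
  have "\<exists>g. g \<in> carrier G \<and> g \<notin> prod_steps G ?T k" for k
    using not_gen prod_steps_closed[OF T(1), of k] by (auto simp: generates_finitely_iff)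
  then obtain f where f: "\<And>k. f k \<in> carrier G" "\<And>k. f k \<notin> prod_steps G ?T k" by metis
  have "f \<notin> bounded_width G ?T U"
  proof
    assume "f \<in> bounded_width G ?T U"
    then obtain k where "eventually (\<lambda>n. f n \<in> prod_steps G ?T k) U"
      by (auto simp: bounded_width_def)
    then have "eventually (\<lambda>n. f n \<in> prod_steps G ?T k \<and> k \<le> n) U"
      using non_principal_eventually_ge[OF U] by (rule eventually_conj)
    moreover have "U \<noteq> bot" using U(1) by (simp add: is_ultrafilter_def)
    ultimately obtain n where "f n \<in> prod_steps G ?T k" "k \<le> n" using eventually_happens' by blast
    then show False using prod_steps_mono[OF T] f(2)[of n] by blast
  qed
  then show ?thesis using that f(1) by blast
qed

lemma (in symmetric_subset) bounded_width_quotient_elementary_abelian: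
  assumes prime: "Factorial_Ring.prime p"
    and powers: "\<And>g. g \<in> carrier G \<Longrightarrow> g [^] p \<in> S"
    and comm: "\<And>g h. g \<in> carrier G \<Longrightarrow> h \<in> carrier G \<Longrightarrow> grp_comm G g h \<in> S"
  shows "elementary_abelian (seq_group G Mod bounded_width G S U) p"
proof -
  interpret W: normal "bounded_width G S U" "seq_group G"
    by (rule bounded_width_normal[OF comm])
  have pointwise: "f \<in> bounded_width G S U" if "\<And>n. f n \<in> S" for f
    using that subset by (intro eventually_in_bounded_width) auto
  show ?thesis
  proof (rule W.elementary_abelian_quotient[OF prime])
    fix g assume "g \<in> carrier (seq_group G)"
    then show "g [^]\<^bsub>seq_group G\<^esub> p \<in> bounded_width G S U"
      unfolding seq_group_pow seq_group_carrier by (intro pointwise powers) auto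
  next
    fix g h assume gh: "g \<in> carrier (seq_group G)" "h \<in> carrier (seq_group G)"
    then show "grp_comm (seq_group G) g h \<in> bounded_width G S U"
      unfolding seq_group_comm[OF is_group gh] seq_group_carrier by (intro pointwise comm) auto
  qed
qed

lemma (in symmetric_subset) bounded_width_ultrapower_quotient:
  assumes comm: "\<And>g h. g \<in> carrier G \<Longrightarrow> h \<in> carrier G \<Longrightarrow> grp_comm G g h \<in> S"
  shows "ultrapower_quotient G U (bounded_width G S U)"
proof (rule ultrapower_quotient.intro)
  show "group G" by (rule is_group)
  show "bounded_width G S U \<lhd> seq_group G" by (rule bounded_width_normal[OF comm])
  fix f assume "f \<in> UNIV \<rightarrow> carrier G" "eventually (\<lambda>n. f n = \<one>) U"
  then show "f \<in> bounded_width G S U"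
    by (intro eventually_in_bounded_width) (auto elim: eventually_mono simp: one_mem)
qed

lemma (in normal) coset_nontrivial:
  assumes "a \<in> carrier G" "a \<notin> H"
  shows "H #> a \<in> carrier (G Mod H)" "H #> a \<noteq> \<one>\<^bsub>G Mod H\<^esub>"
  using assms rcos_self[OF assms(1) subgroup_axioms] by (auto simp: carrier_FactGroup)

theorem lemma1:
  fixes G :: "('a, 'b) monoid_scheme" and p :: nat
  assumes "group G" and "Factorial_Ring.prime p"
    and "\<not> generates_finitely G (pow_comm_values G p)"
  shows "\<forall>U. is_ultrafilter U \<and> non_principal U \<longrightarrow>
           (\<exists>h. h \<in> hom (ultrapower G U) (integer_mod_group p)
                \<and> h ` carrier (ultrapower G U) = carrier (integer_mod_group p))"
proof (intro allI impI)
  fix U assume U: "is_ultrafilter U \<and> non_principal U"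
  interpret G: group G by fact
  define S where "S = symmetrize G (pow_comm_values G p)"
  define W where "W = bounded_width G S U"
  have values_closed: "pow_comm_values G p \<subseteq> carrier G"
    unfolding pow_comm_values_def grp_comm_def by auto
  interpret symmetric_subset G S
    unfolding S_def using values_closed by (rule G.symmetric_subset_symmetrize)
  have powers: "g [^]\<^bsub>G\<^esub> p \<in> S" and commutators: "grp_comm G g h \<in> S"
    if "g \<in> carrier G" "h \<in> carrier G" for g h
    using that by (auto simp: S_def symmetrize_def pow_comm_values_def)
  interpret Q: elementary_abelian "seq_group G Mod W" p
    unfolding W_def using assms(2) powers commutators
    by (rule bounded_width_quotient_elementary_abelian)
  interpret W: normal W "seq_group G" unfolding W_def by (rule bounded_width_normal[OF commutators])
  interpret ultrapower_quotient G U W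
    unfolding W_def by (rule bounded_width_ultrapower_quotient[OF commutators])
  obtain f where "f \<in> UNIV \<rightarrow> carrier G" "f \<notin> W"
    using G.escaping_sequence[OF values_closed assms(3)] U unfolding W_def S_def by blast
  then obtain \<phi> where \<phi>: "\<phi> \<in> hom (seq_group G Mod W) (integer_mod_group p)"
    "\<phi> ` carrier (seq_group G Mod W) = carrier (integer_mod_group p)"
    using Q.surjective_functional W.coset_nontrivial unfolding seq_group_carrier by metis
  have "\<phi> \<circ> project \<in> hom (ultrapower G U) (integer_mod_group p)"
    using project_hom \<phi>(1) by (rule hom_compose)
  moreover have "(\<phi> \<circ> project) ` carrier (ultrapower G U) = carrier (integer_mod_group p)"
    by (simp only: image_comp[symmetric] project_onto \<phi>(2))
  ultimately show "\<exists>h. h \<in> hom (ultrapower G U) (integer_mod_group p)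
                \<and> h ` carrier (ultrapower G U) = carrier (integer_mod_group p)" by blast
qed

end
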